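(* Let $f$ be a quadratic form in $s$ variables with integer coefficients, $b,a\in\mathbb{Z}$, and let $q_1,q_2,W_1,W_2$ be positive integers with $\gcd(q_1W_1,q_2W_2)=1$. Then $$S^\ast_{W_1W_2,b}(q_1q_2,a)=S^\ast_{W_1,b}(q_1,a\overline{q_2})\,S^\ast_{W_2,b}(q_2,a\overline{q_1}),$$ where $\overline{q_2}$ denotes an inverse of $q_2$ modulo $q_1$ and $\overline{q_1}$ an inverse of $q_1$ modulo $q_2$.
   Context: $e(z)=e^{2\pi iz}$. For positive integers $q,W$ and integers $a,b$, $$S^\ast_{W,b}(q,a)=\sum_{\substack{1\le c_1,\ldots,c_s\le qW\\ \gcd(c_j,q)=1,\ c_j\equiv b\ (\mathrm{mod}\ W)\ (1\le j\le s)}}e\Big(\frac{af(\mathbf{c})}{q}\Big).$$ *)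

theory Defs
  imports "HOL-Analysis.Analysis" "HOL-Number_Theory.Cong"
begin

definition e :: "real \<Rightarrow> complex" where
  "e z = exp (2 * of_real pi * \<i> * of_real z)"

definition qform :: "nat \<Rightarrow> (nat \<Rightarrow> nat \<Rightarrow> int) \<Rightarrow> (nat \<Rightarrow> int) \<Rightarrow> int" where
  "qform s A c = (\<Sum>i<s. \<Sum>j<s. A i j * c i * c j)"

definition Sstar :: "nat \<Rightarrow> (nat \<Rightarrow> nat \<Rightarrow> int) \<Rightarrow> int \<Rightarrow> int \<Rightarrow> int \<Rightarrow> int \<Rightarrow> complex" where
  "Sstar s A W b q a =
     (\<Sum>c \<in> PiE {..<s} (\<lambda>_. {x::int. 1 \<le> x \<and> x \<le> q * W \<and> coprime x q \<and> [x = b] (mod W)}).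
        e (real_of_int (a * qform s A c) / real_of_int q))"

end

theory Submission
  imports Defs
begin

text \<open>By the Chinese remainder theorem, reduction modulo \<open>q1 W1\<close> and \<open>q2 W2\<close> maps the
  summation range of \<open>S*_{W1 W2, b}(q1 q2, -)\<close> bijectively onto the product of the ranges
  of \<open>S*_{W1, b}(q1, -)\<close> and \<open>S*_{W2, b}(q2, -)\<close>, hence also vectors of length \<open>s\<close> onto pairs
  of vectors. Since \<open>q2 q2bar + q1 q1bar = 1 (mod q1 q2)\<close>, every integer \<open>n\<close> satisfies
  \<open>e(n / (q1 q2)) = e(n q2bar / q1) e(n q1bar / q2)\<close>, and \<open>f(c)\<close> is congruent modulo \<open>q1\<close>
  (resp. \<open>q2\<close>) to \<open>f\<close> of the reduced vector, so the summands correspond.\<close>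

lemma e_add: "e (x + y) = e x * e y"
  unfolding e_def by (simp add: distrib_left distrib_right exp_add)

lemma e_of_int: "e (of_int n) = 1"
proof -
  have "e (of_int n) = exp ((2 * of_int n * pi) * \<i>)"
    unfolding e_def by (simp add: mult_ac)
  also have "\<dots> = 1" by (rule exp_integer_2pi) simp
  finally show ?thesis .
qed

lemma e_frac_cong:
  fixes n m q :: int
  assumes "[n = m] (mod q)"
  shows "e (of_int n / of_int q) = e (of_int m / of_int q)"
proof (cases "q = 0")
  case True
  with assms show ?thesis by simp
next
  case False
  obtain k where "n = m + q * k" using assms cong_iff_lin cong_sym by blast
  with False have "of_int n / of_int q = of_int m / of_int q + (of_int k :: real)"
    by (simp add: field_simps)
  then show ?thesis by (simp add: e_add e_of_int)
qed

lemma cong_inverse_sum_eq_1: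
  fixes q1 q2 q1bar q2bar :: int
  assumes "coprime q1 q2" "[q2 * q2bar = 1] (mod q1)" "[q1 * q1bar = 1] (mod q2)"
  shows "[q2 * q2bar + q1 * q1bar = 1] (mod q1 * q2)"
proof (rule coprime_cong_mult[OF _ _ assms(1)])
  show "[q2 * q2bar + q1 * q1bar = 1] (mod q1)"
    using cong_add[OF assms(2) cong_mult_self_left[of q1 q1bar]] by simp
  show "[q2 * q2bar + q1 * q1bar = 1] (mod q2)"
    using cong_add[OF cong_mult_self_left[of q2 q2bar] assms(3)] by simp
qed

lemma e_frac_mult_split:
  fixes n q1 q2 q1bar q2bar :: int
  assumes "q1 \<noteq> 0" "q2 \<noteq> 0" "coprime q1 q2"
    and "[q2 * q2bar = 1] (mod q1)" "[q1 * q1bar = 1] (mod q2)"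
  shows "e (of_int n / of_int (q1 * q2)) =
         e (of_int (n * q2bar) / of_int q1) * e (of_int (n * q1bar) / of_int q2)"
proof -
  have "[n * (q2 * q2bar + q1 * q1bar) = n] (mod q1 * q2)"
    using cong_scalar_left[OF cong_inverse_sum_eq_1[OF assms(3-5)], of n] by simp
  then have "e (of_int n / of_int (q1 * q2)) =
             e (of_int (n * (q2 * q2bar + q1 * q1bar)) / of_int (q1 * q2))"
    by (rule e_frac_cong[OF cong_sym])
  also have "\<dots> = e (of_int (n * q2bar) / of_int q1 + of_int (n * q1bar) / of_int q2)"
    using assms(1,2) by (simp add: field_simps)
  finally show ?thesis by (simp add: e_add)
qed

lemma qform_cong:
  assumes "\<And>i. i < s \<Longrightarrow> [c i = d i] (mod m)"
  shows "[qform s A c = qform s A d] (mod m)"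
  unfolding qform_def by (intro cong_sum cong_mult cong_refl) (auto intro: assms)

lemma e_qform_mult_split:
  fixes a q1 q2 q1bar q2bar :: int and c c1 c2 :: "nat \<Rightarrow> int"
  assumes "q1 \<noteq> 0" "q2 \<noteq> 0" "coprime q1 q2"
    and "[q2 * q2bar = 1] (mod q1)" "[q1 * q1bar = 1] (mod q2)"
    and "\<And>i. i < s \<Longrightarrow> [c1 i = c i] (mod q1)" "\<And>i. i < s \<Longrightarrow> [c2 i = c i] (mod q2)"
  shows "e (of_int (a * qform s A c) / of_int (q1 * q2)) =
         e (of_int (a * q2bar * qform s A c1) / of_int q1) *
         e (of_int (a * q1bar * qform s A c2) / of_int q2)"
proof -
  have "[qform s A c1 = qform s A c] (mod q1)" "[qform s A c2 = qform s A c] (mod q2)"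
    using assms(6,7) by (auto intro: qform_cong)
  then have "[a * q2bar * qform s A c1 = a * qform s A c * q2bar] (mod q1)"
    and "[a * q1bar * qform s A c2 = a * qform s A c * q1bar] (mod q2)"
    by (metis cong_scalar_left mult.assoc mult.commute)+
  then show ?thesis
    using e_frac_mult_split[OF assms(1-5), of "a * qform s A c"] by (simp only: e_frac_cong)
qed

text \<open>Residues are represented in \<open>{1..M}\<close>, not \<open>{0..<M}\<close>, to match the summation range
  \<open>1 \<le> c \<le> q W\<close> of \<open>Sstar\<close>.\<close>

definition pos_residue :: "int \<Rightarrow> int \<Rightarrow> int" where
  "pos_residue M x = (x - 1) mod M + 1"

lemma pos_residue_bounds: "M > 0 \<Longrightarrow> pos_residue M x \<in> {1..M}"
  unfolding pos_residue_def atLeastAtMost_iff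
  using pos_mod_bound[of M "x - 1"] pos_mod_sign[of M "x - 1"] by linarith

lemma cong_pos_residue: "[pos_residue M x = x] (mod M)"
  unfolding pos_residue_def cong_def by (metis diff_add_cancel mod_add_left_eq mod_mod_trivial)

lemma pos_residue_eq_self: "x \<in> {1..M} \<Longrightarrow> pos_residue M x = x"
  unfolding pos_residue_def by simp

lemma pos_residue_cong: "[x = y] (mod M) \<Longrightarrow> pos_residue M x = pos_residue M y"
  unfolding pos_residue_def cong_def by (metis mod_diff_left_eq)

lemma cong_interval_imp_eq:
  fixes x y M :: int
  assumes "x \<in> {1..M}" "y \<in> {1..M}" "[x = y] (mod M)"
  shows "x = y"
proof -
  have "x = pos_residue M x" using assms(1) by (simp add: pos_residue_eq_self)
  also have "\<dots> = pos_residue M y" using assms(3) by (rule pos_residue_cong)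
  also have "\<dots> = y" using assms(2) by (simp add: pos_residue_eq_self)
  finally show ?thesis .
qed

lemma bij_betw_pos_residue_pair:
  fixes M1 M2 :: int
  assumes "M1 > 0" "M2 > 0" "coprime M1 M2"
  shows "bij_betw (\<lambda>x. (pos_residue M1 x, pos_residue M2 x)) {1..M1 * M2} ({1..M1} \<times> {1..M2})"
    (is "bij_betw ?r ?A ?B")
proof -
  have inj: "inj_on ?r ?A"
  proof (rule inj_onI)
    fix x y assume x: "x \<in> ?A" and y: "y \<in> ?A" and "?r x = ?r y"
    then have "[x = y] (mod M1)" "[x = y] (mod M2)"
      using cong_pos_residue by (metis cong_sym cong_trans prod.inject)+
    then have "[x = y] (mod M1 * M2)" using assms(3) by (rule coprime_cong_mult)
    with x y show "x = y" by (rule cong_interval_imp_eq)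
  qed
  have "?r ` ?A \<subseteq> ?B" using pos_residue_bounds assms(1,2) by auto
  moreover have "card (?r ` ?A) = card ?B"
    using inj assms(1,2) by (simp add: card_image card_cartesian_product nat_mult_distrib)
  ultimately have "?r ` ?A = ?B" by (intro card_subset_eq) auto
  with inj show ?thesis unfolding bij_betw_def ..
qed

definition Sstar_range :: "int \<Rightarrow> int \<Rightarrow> int \<Rightarrow> int set" where
  "Sstar_range q W b = {x. 1 \<le> x \<and> x \<le> q * W \<and> coprime x q \<and> [x = b] (mod W)}"

lemma Sstar_eq_sum_Sstar_range:
  "Sstar s A W b q a =
     (\<Sum>c \<in> PiE {..<s} (\<lambda>_. Sstar_range q W b). e (of_int (a * qform s A c) / of_int q))"
  unfolding Sstar_def Sstar_range_def ..

lemma pos_residue_in_Sstar_range_iff: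
  assumes "q > 0" "W > 0"
  shows "pos_residue (q * W) x \<in> Sstar_range q W b \<longleftrightarrow> coprime x q \<and> [x = b] (mod W)"
proof -
  have "[pos_residue (q * W) x = x] (mod q)" "[pos_residue (q * W) x = x] (mod W)"
    using cong_pos_residue[of "q * W" x] by (auto intro: cong_dvd_modulus)
  then show ?thesis
    using pos_residue_bounds[of "q * W" x] assms unfolding Sstar_range_def
    by (auto simp: coprime_cong_cong_left intro: cong_trans cong_sym)
qed

lemma bij_betw_Sstar_range:
  fixes q1 q2 W1 W2 b :: int
  assumes "q1 > 0" "q2 > 0" "W1 > 0" "W2 > 0" "coprime (q1 * W1) (q2 * W2)"
  shows "bij_betw (\<lambda>x. (pos_residue (q1 * W1) x, pos_residue (q2 * W2) x))
           (Sstar_range (q1 * q2) (W1 * W2) b) (Sstar_range q1 W1 b \<times> Sstar_range q2 W2 b)"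
proof -
  have "coprime W1 W2" using assms(5) by simp
  then have cong_W: "[x = b] (mod W1 * W2) \<longleftrightarrow> [x = b] (mod W1) \<and> [x = b] (mod W2)" for x
    by (auto intro: coprime_cong_mult cong_dvd_modulus)
  have "Sstar_range (q1 * q2) (W1 * W2) b =
          {x \<in> {1..q1 * W1 * (q2 * W2)}. coprime x (q1 * q2) \<and> [x = b] (mod W1 * W2)}"
    unfolding Sstar_range_def by (auto simp: mult_ac)
  moreover have "Sstar_range q1 W1 b \<times> Sstar_range q2 W2 b =
          {y \<in> {1..q1 * W1} \<times> {1..q2 * W2}. fst y \<in> Sstar_range q1 W1 b \<and> snd y \<in> Sstar_range q2 W2 b}"
    unfolding Sstar_range_def by auto
  ultimately show ?thesis
    using assms by (simp only:) (intro bij_betw_Collect bij_betw_pos_residue_pair;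
      auto simp: pos_residue_in_Sstar_range_iff cong_W)
qed

lemma bij_betw_PiE_pair:
  assumes "bij_betw (\<lambda>x. (g1 x, g2 x)) A (B \<times> C)"
  shows "bij_betw (\<lambda>c. (restrict (g1 \<circ> c) I, restrict (g2 \<circ> c) I))
           (PiE I (\<lambda>_. A)) (PiE I (\<lambda>_. B) \<times> PiE I (\<lambda>_. C))"
proof -
  define h where "h = inv_into A (\<lambda>x. (g1 x, g2 x))"
  have left: "h (g1 x, g2 x) = x" if "x \<in> A" for x
    unfolding h_def using assms that by (rule bij_betw_inv_into_left)
  have right: "g1 (h y) = fst y \<and> g2 (h y) = snd y" if "y \<in> B \<times> C" for y
    unfolding h_def using bij_betw_inv_into_right[OF assms that] by (simp add: prod_eq_iff)
  have h_into: "h y \<in> A" if "y \<in> B \<times> C" for y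
    unfolding h_def using bij_betw_inv_into[OF assms] that by (rule bij_betw_apply)
  have g_into: "g1 x \<in> B \<and> g2 x \<in> C" if "x \<in> A" for x
    using bij_betw_apply[OF assms that] by simp
  show ?thesis
    by (rule bij_betw_byWitness[where f' = "\<lambda>(d1, d2). restrict (\<lambda>i. h (d1 i, d2 i)) I"])
      (use left right h_into g_into in \<open>auto simp: PiE_iff extensional_def fun_eq_iff\<close>)
qed

theorem lemma2p1:
  fixes s :: nat and A :: "nat \<Rightarrow> nat \<Rightarrow> int"
    and a b q1 q2 W1 W2 q1bar q2bar :: int
  assumes "q1 > 0" "q2 > 0" "W1 > 0" "W2 > 0"
    and "coprime (q1 * W1) (q2 * W2)"
    and "[q2 * q2bar = 1] (mod q1)"
    and "[q1 * q1bar = 1] (mod q2)"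
  shows "Sstar s A (W1 * W2) b (q1 * q2) a =
         Sstar s A W1 b q1 (a * q2bar) * Sstar s A W2 b q2 (a * q1bar)"
proof -
  let ?f = "qform s A" and ?I = "{..<s}"
  let ?X = "Sstar_range (q1 * q2) (W1 * W2) b"
    and ?Y1 = "Sstar_range q1 W1 b" and ?Y2 = "Sstar_range q2 W2 b"
  define \<phi> where "\<phi> c = (restrict (pos_residue (q1 * W1) \<circ> c) ?I,
                           restrict (pos_residue (q2 * W2) \<circ> c) ?I)" for c
  define G where "G d = e (of_int (a * q2bar * ?f (fst d)) / of_int q1) *
                       e (of_int (a * q1bar * ?f (snd d)) / of_int q2)" for d
  have bij: "bij_betw \<phi> (PiE ?I (\<lambda>_. ?X)) (PiE ?I (\<lambda>_. ?Y1) \<times> PiE ?I (\<lambda>_. ?Y2))"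
    unfolding \<phi>_def by (intro bij_betw_PiE_pair bij_betw_Sstar_range assms(1-5))
  have G_\<phi>: "G (\<phi> c) = e (of_int (a * ?f c) / of_int (q1 * q2))" for c
    unfolding G_def \<phi>_def
    by (rule e_qform_mult_split[symmetric])
      (use assms in \<open>auto simp: cong_modulus_mult[OF cong_pos_residue]\<close>)
  have "Sstar s A W1 b q1 (a * q2bar) * Sstar s A W2 b q2 (a * q1bar) =
        (\<Sum>d \<in> PiE ?I (\<lambda>_. ?Y1) \<times> PiE ?I (\<lambda>_. ?Y2). G d)"
    unfolding Sstar_eq_sum_Sstar_range G_def
    by (simp add: sum_product sum.cartesian_product case_prod_beta)
  also have "\<dots> = (\<Sum>c \<in> PiE ?I (\<lambda>_. ?X). G (\<phi> c))"
    by (rule sum.reindex_bij_betw[OF bij, symmetric])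
  also have "\<dots> = Sstar s A (W1 * W2) b (q1 * q2) a"
    unfolding Sstar_eq_sum_Sstar_range G_\<phi> ..
  finally show ?thesis ..
qed

end
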